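(* Let $\mathcal{A}\subseteq\mathbb{R}^3$ and let $\varphi_1,\ldots,\varphi_N\in L^2(\mathcal{A})$ be pairwise non-parallel with $\boldsymbol{\Psi}=\int_{\mathcal{A}}\boldsymbol{\varphi}^{\mathsf{H}}\boldsymbol{\varphi}\,\mathrm{d}\mathbf{r}$ positive definite, $\boldsymbol{\varphi}(\mathbf{r})=[\varphi_1(\mathbf{r}),\ldots,\varphi_N(\mathbf{r})]$, and eigendecomposition $\boldsymbol{\Psi}=\mathbf{U}\,\mathrm{diag}(\lambda_1,\ldots,\lambda_N)\mathbf{U}^{\mathsf{H}}$, $\lambda_n>0$. For Hermitian $\mathbf{M}$ let $T_{\mathbf{M}}$ be the operator on $L^2(\mathcal{A})$ with kernel $\delta(\mathbf{r}-\mathbf{r}')-\boldsymbol{\varphi}(\mathbf{r})\mathbf{M}\boldsymbol{\varphi}^{\mathsf{H}}(\mathbf{r}')$. Let $\overline{B}_\varphi=T_{\overline{\mathbf{B}}_{\boldsymbol\Psi}}$ with $\overline{\mathbf{B}}_{\boldsymbol\Psi}=\mathbf{U}\,\mathrm{diag}\big(\tfrac{1+\sqrt{1+\lambda_n}}{\lambda_n\sqrt{1+\lambda_n}}\big)\mathbf{U}^{\mathsf{H}}$ and $B_\varphi=T_{\mathbf{B}_{\boldsymbol\Psi}}$ with $\mathbf{B}_{\boldsymbol\Psi}=\mathbf{U}\,\mathrm{diag}\big(\tfrac{1+\sqrt{1+\lambda_n}}{\lambda_n}\big)\mathbf{U}^{\mathsf{H}}$. Then $\overline{B}_\varphi B_\varphi=B_\varphi\overline{B}_\varphi=\mathrm{Id}$,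 i.e. $\int_{\mathcal{A}}\overline{B}_\varphi(\mathbf{r}_1,\mathbf{r})B_\varphi(\mathbf{r},\mathbf{r}_2)\,\mathrm{d}\mathbf{r}=\int_{\mathcal{A}}B_\varphi(\mathbf{r}_2,\mathbf{r})\overline{B}_\varphi(\mathbf{r},\mathbf{r}_1)\,\mathrm{d}\mathbf{r}=\delta(\mathbf{r}_1-\mathbf{r}_2)$.
   Context: Kernels containing $\delta(\mathbf{r}-\mathbf{r}')$ denote the identity plus a finite-rank integral operator. *)

theory Defs
  imports "HOL-Analysis.Analysis"
begin

definition L2 :: "(real^3) set \<Rightarrow> (real^3 \<Rightarrow> complex) \<Rightarrow> bool" where
  "L2 A f \<longleftrightarrow> f \<in> borel_measurable (lebesgue_on A)
      \<and> integrable (lebesgue_on A) (\<lambda>r. (norm (f r))^2)"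

definition mat_adj :: "complex^'n^'n \<Rightarrow> complex^'n^'n" where
  "mat_adj U = (\<chi> i j. cnj (U $ j $ i))"

definition diag_mat :: "('n::finite \<Rightarrow> complex) \<Rightarrow> complex^'n^'n" where
  "diag_mat d = (\<chi> i j. if i = j then d i else 0)"

definition unitary :: "complex^'n::finite^'n \<Rightarrow> bool" where
  "unitary U \<longleftrightarrow> U ** mat_adj U = mat 1 \<and> mat_adj U ** U = mat 1"

definition hermitian :: "complex^'n^'n \<Rightarrow> bool" where
  "hermitian M \<longleftrightarrow> mat_adj M = M"

definition pos_def :: "complex^'n::finite^'n \<Rightarrow> bool" where
  "pos_def M \<longleftrightarrow> hermitian M \<and>
     (\<forall>x::complex^'n. x \<noteq> 0 \<longrightarrow>
        (let q = (\<Sum>i\<in>UNIV. \<Sum>j\<in>UNIV. cnj (x $ i) * M $ i $ j * x $ j) in Im q = 0 \<and> Re q > 0))"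

definition gram :: "(real^3) set \<Rightarrow> ('n::finite \<Rightarrow> real^3 \<Rightarrow> complex) \<Rightarrow> complex^'n^'n" where
  "gram A \<phi> = (\<chi> i j. integral\<^sup>L (lebesgue_on A) (\<lambda>r. cnj (\<phi> i r) * \<phi> j r))"

text \<open>Operator with kernel delta(r-r') - phi(r) M phi^H(r'), acting on functions on A.\<close>
definition T_op :: "(real^3) set \<Rightarrow> ('n::finite \<Rightarrow> real^3 \<Rightarrow> complex) \<Rightarrow> complex^'n^'n
     \<Rightarrow> (real^3 \<Rightarrow> complex) \<Rightarrow> (real^3 \<Rightarrow> complex)" where
  "T_op A \<phi> M f = (\<lambda>r. f r - (\<Sum>i\<in>UNIV. \<Sum>j\<in>UNIV. \<phi> i r * M $ i $ j *
       integral\<^sup>L (lebesgue_on A) (\<lambda>r'. cnj (\<phi> j r') * f r')))"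

definition non_parallel :: "(real^3) set \<Rightarrow> ('n \<Rightarrow> real^3 \<Rightarrow> complex) \<Rightarrow> bool" where
  "non_parallel A \<phi> \<longleftrightarrow> (\<forall>i j. i \<noteq> j \<longrightarrow>
      \<not> (\<exists>c::complex. AE r in lebesgue_on A. \<phi> i r = c * \<phi> j r))"

end

theory Submission
  imports Defs
begin

(*
  Writing c(f) for the vector of inner products of f with the \<phi>_j, one has
  c(f - \<phi> a) = c(f) - \<Psi> a, so the operators compose like T_X T_Y = T_(X + Y - X \<Psi> Y).
  Hence T_X T_Y = Id as soon as X \<Psi> Y = X + Y. For matrices diagonal in the eigenbasis
  of \<Psi> this reduces to the scalar identity x \<lambda> y = x + y for each eigenvalue \<lambda>,
  which for x = (1 + s) / (\<lambda> s), y = (1 + s) / \<lambda>, s = sqrt (1 + \<lambda>) holds because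
  both sides equal (1 + s)^2 / (\<lambda> s).
*)

definition inner_coeffs ::
    "(real^3) set \<Rightarrow> ('n::finite \<Rightarrow> real^3 \<Rightarrow> complex) \<Rightarrow> (real^3 \<Rightarrow> complex) \<Rightarrow> complex^'n" where
  "inner_coeffs A \<phi> f = (\<chi> j. integral\<^sup>L (lebesgue_on A) (\<lambda>r. cnj (\<phi> j r) * f r))"

lemma L2_integrable_cnj_mult:
  assumes "L2 A f" "L2 A g"
  shows "integrable (lebesgue_on A) (\<lambda>r. cnj (f r) * g r)"
proof (rule Bochner_Integration.integrable_bound)
  show "integrable (lebesgue_on A) (\<lambda>r. (norm (f r))\<^sup>2 + (norm (g r))\<^sup>2)"
    using assms by (auto simp: L2_def)
  have "f \<in> borel_measurable (lebesgue_on A)" "g \<in> borel_measurable (lebesgue_on A)"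
    using assms unfolding L2_def by auto
  then show "(\<lambda>r. cnj (f r) * g r) \<in> borel_measurable (lebesgue_on A)"
    by (intro borel_measurable_times borel_measurable_continuous_on[where f = cnj]
        continuous_intros)
  have "norm (f r) * norm (g r) \<le> (norm (f r))\<^sup>2 + (norm (g r))\<^sup>2" for r
    using sum_squares_bound[of "norm (f r)" "norm (g r)"]
      mult_nonneg_nonneg[OF norm_ge_zero[of "f r"] norm_ge_zero[of "g r"]]
    unfolding power2_eq_square by linarith
  then show "AE r in lebesgue_on A. norm (cnj (f r) * g r) \<le> norm ((norm (f r))\<^sup>2 + (norm (g r))\<^sup>2)"
    by (simp add: norm_mult)
qed

lemma T_op_eq_matrix_vector_mult:
  "T_op A \<phi> M f = (\<lambda>r. f r - (\<Sum>i\<in>UNIV. \<phi> i r * (M *v inner_coeffs A \<phi> f) $ i))"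
  unfolding T_op_def matrix_vector_mult_def inner_coeffs_def
  by (simp add: sum_distrib_left mult.assoc)

lemma T_op_zero: "T_op A \<phi> 0 f = f"
  by (simp add: T_op_def)

lemma inner_coeffs_diff_combination:
  assumes "\<And>i. L2 A (\<phi> i)" "L2 A f"
  shows "inner_coeffs A \<phi> (\<lambda>r. f r - (\<Sum>i\<in>UNIV. \<phi> i r * a $ i))
           = inner_coeffs A \<phi> f - gram A \<phi> *v a"
proof -
  have "integral\<^sup>L (lebesgue_on A) (\<lambda>r. cnj (\<phi> k r) * (f r - (\<Sum>i\<in>UNIV. \<phi> i r * a $ i)))
      = integral\<^sup>L (lebesgue_on A) (\<lambda>r. cnj (\<phi> k r) * f r)
        - (\<Sum>i\<in>UNIV. integral\<^sup>L (lebesgue_on A) (\<lambda>r. cnj (\<phi> k r) * \<phi> i r) * a $ i)" for k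
  proof -
    have int_f: "integrable (lebesgue_on A) (\<lambda>r. cnj (\<phi> k r) * f r)"
      using assms by (rule L2_integrable_cnj_mult)
    have int_\<phi>: "integrable (lebesgue_on A) (\<lambda>r. cnj (\<phi> k r) * \<phi> i r * a $ i)" for i
      using L2_integrable_cnj_mult[OF assms(1) assms(1)] by (rule integrable_mult_left)
    have "(\<lambda>r. cnj (\<phi> k r) * (f r - (\<Sum>i\<in>UNIV. \<phi> i r * a $ i)))
        = (\<lambda>r. cnj (\<phi> k r) * f r - (\<Sum>i\<in>UNIV. cnj (\<phi> k r) * \<phi> i r * a $ i))"
      by (simp add: algebra_simps sum_distrib_left)
    then have "integral\<^sup>L (lebesgue_on A) (\<lambda>r. cnj (\<phi> k r) * (f r - (\<Sum>i\<in>UNIV. \<phi> i r * a $ i)))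
        = integral\<^sup>L (lebesgue_on A) (\<lambda>r. cnj (\<phi> k r) * f r)
          - integral\<^sup>L (lebesgue_on A) (\<lambda>r. \<Sum>i\<in>UNIV. cnj (\<phi> k r) * \<phi> i r * a $ i)"
      using int_f int_\<phi> by (simp add: Bochner_Integration.integral_diff)
    also have "integral\<^sup>L (lebesgue_on A) (\<lambda>r. \<Sum>i\<in>UNIV. cnj (\<phi> k r) * \<phi> i r * a $ i)
        = (\<Sum>i\<in>UNIV. integral\<^sup>L (lebesgue_on A) (\<lambda>r. cnj (\<phi> k r) * \<phi> i r) * a $ i)"
      using int_\<phi> by (simp add: Bochner_Integration.integral_sum)
    finally show ?thesis .
  qed
  then show ?thesis
    by (simp add: vec_eq_iff inner_coeffs_def gram_def matrix_vector_mult_def)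
qed

lemma T_op_mult:
  assumes "\<And>i. L2 A (\<phi> i)" "L2 A f"
  shows "T_op A \<phi> X (T_op A \<phi> Y f) = T_op A \<phi> (X + Y - X ** gram A \<phi> ** Y) f"
proof -
  define c where "c = inner_coeffs A \<phi> f"
  have coeffs_Y: "inner_coeffs A \<phi> (T_op A \<phi> Y f) = c - gram A \<phi> *v (Y *v c)"
    unfolding T_op_eq_matrix_vector_mult c_def by (rule inner_coeffs_diff_combination[OF assms])
  have combined: "Y *v c + X *v (c - gram A \<phi> *v (Y *v c)) = (X + Y - X ** gram A \<phi> ** Y) *v c"
    by (simp add: algebra_simps matrix_vector_mul_assoc matrix_mul_assoc)
  show ?thesis
  proof
    fix r
    have "T_op A \<phi> X (T_op A \<phi> Y f) r
        = f r - (\<Sum>i\<in>UNIV. \<phi> i r * (Y *v c) $ i)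
              - (\<Sum>i\<in>UNIV. \<phi> i r * (X *v (c - gram A \<phi> *v (Y *v c))) $ i)"
      by (simp only: T_op_eq_matrix_vector_mult[of A \<phi> X] coeffs_Y)
        (simp add: T_op_eq_matrix_vector_mult c_def)
    also have "\<dots> = f r - (\<Sum>i\<in>UNIV. \<phi> i r * (Y *v c + X *v (c - gram A \<phi> *v (Y *v c))) $ i)"
      by (simp only: vector_add_component distrib_left sum.distrib diff_diff_eq)
    also have "\<dots> = f r - (\<Sum>i\<in>UNIV. \<phi> i r * ((X + Y - X ** gram A \<phi> ** Y) *v c) $ i)"
      by (simp only: combined)
    finally show "T_op A \<phi> X (T_op A \<phi> Y f) r = T_op A \<phi> (X + Y - X ** gram A \<phi> ** Y) f r"
      by (simp add: T_op_eq_matrix_vector_mult c_def)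
  qed
qed

lemma T_op_mult_eq_id:
  assumes "\<And>i. L2 A (\<phi> i)" "L2 A f" "X ** gram A \<phi> ** Y = X + Y"
  shows "T_op A \<phi> X (T_op A \<phi> Y f) = f"
  using T_op_mult[of A \<phi> f X Y] assms by (simp add: T_op_zero)

lemma diag_mat_mult: "diag_mat d ** diag_mat e = diag_mat (\<lambda>n. d n * e n)"
proof -
  have "(\<Sum>k\<in>UNIV. (if i = k then d i else 0) * (if k = j then e k else 0))
      = (\<Sum>k\<in>UNIV. if k = i then (if i = j then d i * e i else 0) else 0)" for i j
    by (rule sum.cong) auto
  then show ?thesis
    by (simp add: vec_eq_iff diag_mat_def matrix_matrix_mult_def)
qed

lemma matrix_add_rdistrib: "((A::'a::semiring_1^'n^'m) + B) ** (C::'a^'p^'n) = A ** C + B ** C"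
  by (simp add: vec_eq_iff matrix_matrix_mult_def sum.distrib[symmetric] distrib_right)

lemma diag_mat_add: "diag_mat d + diag_mat e = diag_mat (\<lambda>n. d n + e n)"
  by (simp add: vec_eq_iff diag_mat_def)

lemma unitary_conj_diag_mult:
  assumes "unitary U"
  shows "(U ** diag_mat d ** mat_adj U) ** (U ** diag_mat e ** mat_adj U)
           = U ** diag_mat (\<lambda>n. d n * e n) ** mat_adj U"
proof -
  have U_adj_U: "mat_adj U ** U = mat 1"
    using assms by (simp add: unitary_def)
  have "(U ** diag_mat d ** mat_adj U) ** (U ** diag_mat e ** mat_adj U)
      = U ** diag_mat d ** (mat_adj U ** U) ** diag_mat e ** mat_adj U"
    by (simp add: matrix_mul_assoc)
  also have "\<dots> = U ** (diag_mat d ** diag_mat e) ** mat_adj U"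
    by (simp add: U_adj_U matrix_mul_assoc)
  finally show ?thesis
    by (simp only: diag_mat_mult)
qed

lemma unitary_conj_diag_mult_eq_add:
  assumes "unitary U" "\<And>n. x n * l n * y n = x n + y n"
  shows "(U ** diag_mat x ** mat_adj U) ** (U ** diag_mat l ** mat_adj U)
             ** (U ** diag_mat y ** mat_adj U)
           = U ** diag_mat x ** mat_adj U + U ** diag_mat y ** mat_adj U"
  by (simp add: unitary_conj_diag_mult[OF assms(1)] assms(2) diag_mat_add[symmetric]
      matrix_add_ldistrib matrix_add_rdistrib)

lemma sqrt_resolvent_identity:
  fixes l :: real
  assumes "l > 0"
  shows "(1 + sqrt (1 + l)) / (l * sqrt (1 + l)) * l * ((1 + sqrt (1 + l)) / l)
           = (1 + sqrt (1 + l)) / (l * sqrt (1 + l)) + (1 + sqrt (1 + l)) / l"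
proof -
  have "sqrt (1 + l) > 0" "(sqrt (1 + l))\<^sup>2 = 1 + l"
    using assms by auto
  then show ?thesis
    using assms by (simp add: field_simps power2_eq_square)
qed

theorem lemma7:
  fixes A :: "(real^3) set"
    and \<phi> :: "'n::finite \<Rightarrow> real^3 \<Rightarrow> complex"
    and U :: "complex^'n^'n"
    and lam :: "'n \<Rightarrow> real"
  assumes "A \<in> sets lebesgue"
    and "\<And>i. L2 A (\<phi> i)"
    and "non_parallel A \<phi>"
    and "pos_def (gram A \<phi>)"
    and "unitary U"
    and "\<And>n. lam n > 0"
    and "gram A \<phi> = U ** diag_mat (\<lambda>n. complex_of_real (lam n)) ** mat_adj U"
  defines "Bbar \<equiv> U ** diag_mat (\<lambda>n. complex_of_real
              ((1 + sqrt (1 + lam n)) / (lam n * sqrt (1 + lam n)))) ** mat_adj U"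
    and "B \<equiv> U ** diag_mat (\<lambda>n. complex_of_real ((1 + sqrt (1 + lam n)) / lam n)) ** mat_adj U"
  shows "\<forall>f. L2 A f \<longrightarrow>
           (\<forall>r\<in>A. T_op A \<phi> Bbar (T_op A \<phi> B f) r = f r) \<and>
           (\<forall>r\<in>A. T_op A \<phi> B (T_op A \<phi> Bbar f) r = f r)"
proof -
  define bbar b where
    "bbar = (\<lambda>n. complex_of_real ((1 + sqrt (1 + lam n)) / (lam n * sqrt (1 + lam n))))" and
    "b = (\<lambda>n. complex_of_real ((1 + sqrt (1 + lam n)) / lam n))"
  have scalar: "bbar n * complex_of_real (lam n) * b n = bbar n + b n" for n
    using arg_cong[OF sqrt_resolvent_identity[OF assms(6)[of n]], of complex_of_real]
    unfolding bbar_def b_def of_real_mult of_real_add .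
  have scalar': "b n * complex_of_real (lam n) * bbar n = b n + bbar n" for n
    using scalar[of n] by (simp add: ac_simps)
  have Bbar_eq: "Bbar = U ** diag_mat bbar ** mat_adj U"
    and B_eq: "B = U ** diag_mat b ** mat_adj U"
    by (simp_all add: Bbar_def B_def bbar_def b_def)
  have "Bbar ** gram A \<phi> ** B = Bbar + B" "B ** gram A \<phi> ** Bbar = B + Bbar"
    unfolding Bbar_eq B_eq assms(7)
    by (rule unitary_conj_diag_mult_eq_add[OF assms(5)], rule scalar scalar')+
  then show ?thesis
    using T_op_mult_eq_id[of A \<phi>, OF assms(2)] by simp
qed

end
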